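(* Let $m\ge3$, let $(f,\Gamma)$ be an elliptic data for conformal metrics and let $c\le0$ be a constant. Then there is no conformal metric $g=e^{2\rho}g_0$ on $\overline{\mathbb{S}^m_+}$ with $\rho\in C^{2,\alpha}(\overline{\mathbb{S}^m_+})$ such that $$f(\lambda(g))=0\ \text{ (with }\lambda(g)\in\overline\Gamma)\ \text{in }\overline{\mathbb{S}^m_+},\qquad h(g)=c\ \text{on }\partial\mathbb{S}^m_+ .$$
   Context: $\mathbb{S}^m\subset\mathbb{R}^{m+1}$ is the unit sphere with round metric $g_0$, $\nabla$ its gradient; $\mathbb{S}^m_+=\{x_{m+1}>0\}$. For $g=e^{2\rho}g_0$, $\lambda(g)=(\lambda_1,\dots,\lambda_m)$ are the eigenvalues of $g^{-1}\mathrm{Sch}(g)$, $\mathrm{Sch}(g)=\frac{1}{m-2}\big(\mathrm{Ric}(g)-\frac{R(g)}{2(m-1)}g\big)$. Let $\Gamma_m=\{x:x_i>0\ \forall i\}$, $\Gamma_1=\{x:\sum x_i>0\}$. Elliptic data: $(f,\Gamma)$ with $\Gamma\subset\mathbb{R}^m$ an open convex symmetric cone, $\Gamma_m\subset\Gamma\subset\Gamma_1$, and $f\in C^0(\overline\Gamma)\cap C^1(\Gamma)$ symmetric, $f=0$ on $\partial\Gamma$, $f>0$ on $\Gamma$, homogeneous of degree 1, $\nabla f\in\Gamma_m$ on $\Gamma$. Mean curvature of $\partial\mathbb{S}^m_+$: $h(g)=-e^{-\rho}\langle\nabla\rho,e_{m+1}\rangle$, the normalized mean curvature with respect to $g$ and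 the unit normal $e^{-\rho}e_{m+1}$ pointing into $\mathbb{S}^m_+$ (with this convention the flat unit ball, viewed conformally on $\mathbb{S}^m_+$, has $h=1$). *)

theory Defs
  imports "HOL-Analysis.Analysis"
begin

text \<open>Ambient space R^(m+1) is rendered as (real^'m) \<times> real; the last
  coordinate (snd) is x_(m+1), and e_(m+1) = (0,1).\<close>

type_synonym 'm pt = "(real^'m) \<times> real"

definition e_last :: "('m::finite) pt" where
  "e_last = (0, 1)"

definition hemi :: "('m::finite) pt set" where
  "hemi = {x. norm x = 1 \<and> snd x > 0}"

definition hemi_bdry :: "('m::finite) pt set" where
  "hemi_bdry = {x. norm x = 1 \<and> snd x = 0}"

text \<open>rho has an extension to an open neighbourhood U of S which is C^2, with
  gradient field G and Hessian H, whose second derivative is alpha-Hoelder on S.\<close>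
definition C2_alpha_rep ::
  "real \<Rightarrow> 'm pt set \<Rightarrow> 'm pt set \<Rightarrow> ('m::finite pt \<Rightarrow> real) \<Rightarrow>
   ('m pt \<Rightarrow> 'm pt) \<Rightarrow> ('m pt \<Rightarrow> 'm pt \<Rightarrow> 'm pt) \<Rightarrow> bool" where
  "C2_alpha_rep \<alpha> S U \<rho> G H \<longleftrightarrow>
     open U \<and> S \<subseteq> U \<and>
     (\<forall>x\<in>U. (\<rho> has_derivative (\<lambda>v. G x \<bullet> v)) (at x)) \<and>
     (\<forall>x\<in>U. (G has_derivative H x) (at x)) \<and>
     (\<forall>v. continuous_on U (\<lambda>x. H x v)) \<and>
     (\<exists>L. \<forall>x\<in>S. \<forall>y\<in>S. \<forall>v. norm (H x v - H y v) \<le> L * (dist x y) powr \<alpha> * norm v)"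

text \<open>Round-sphere gradient and covariant Hessian of the restriction to S^m.\<close>
definition sph_grad :: "('m::finite pt \<Rightarrow> 'm pt) \<Rightarrow> 'm pt \<Rightarrow> 'm pt" where
  "sph_grad G x = G x - (G x \<bullet> x) *\<^sub>R x"

definition sph_hess ::
  "('m::finite pt \<Rightarrow> 'm pt) \<Rightarrow> ('m pt \<Rightarrow> 'm pt \<Rightarrow> 'm pt) \<Rightarrow> 'm pt \<Rightarrow> 'm pt \<Rightarrow> 'm pt \<Rightarrow> real" where
  "sph_hess G H x v w = H x v \<bullet> w - (G x \<bullet> x) * (v \<bullet> w)"

text \<open>Schouten tensor of g = e^(2 rho) g_0 on S^m (Sch(g_0) = g_0/2):
  Sch(g) = Sch(g_0) - Hess rho + d rho (x) d rho - |d rho|^2 g_0 / 2.\<close>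
definition schouten ::
  "('m::finite pt \<Rightarrow> 'm pt) \<Rightarrow> ('m pt \<Rightarrow> 'm pt \<Rightarrow> 'm pt) \<Rightarrow> 'm pt \<Rightarrow> 'm pt \<Rightarrow> 'm pt \<Rightarrow> real" where
  "schouten G H x v w =
     (1/2) * (v \<bullet> w) - sph_hess G H x v w
     + (sph_grad G x \<bullet> v) * (sph_grad G x \<bullet> w)
     - (1/2) * (norm (sph_grad G x))\<^sup>2 * (v \<bullet> w)"

text \<open>lam is a vector of the eigenvalues (with multiplicity) of g^{-1} Sch(g) at x:
  there is a g_0-orthonormal basis b of T_x S^m with Sch(g)(b i, w) = lam_i g(b i, w).\<close>
definition sch_eigs ::
  "('m::finite pt \<Rightarrow> real) \<Rightarrow> ('m pt \<Rightarrow> 'm pt) \<Rightarrow> ('m pt \<Rightarrow> 'm pt \<Rightarrow> 'm pt) \<Rightarrow> 'm pt \<Rightarrow> real^'m \<Rightarrow> bool" where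
  "sch_eigs \<rho> G H x lam \<longleftrightarrow>
     (\<exists>b :: 'm \<Rightarrow> 'm pt.
        (\<forall>i. b i \<bullet> x = 0) \<and>
        (\<forall>i j. b i \<bullet> b j = (if i = j then 1 else 0)) \<and>
        (\<forall>i. \<forall>w. w \<bullet> x = 0 \<longrightarrow>
            schouten G H x (b i) w = lam $ i * (exp (2 * \<rho> x) * (b i \<bullet> w))))"

definition mean_curv :: "('m::finite pt \<Rightarrow> real) \<Rightarrow> ('m pt \<Rightarrow> 'm pt) \<Rightarrow> 'm pt \<Rightarrow> real" where
  "mean_curv \<rho> G x = - exp (- \<rho> x) * (sph_grad G x \<bullet> e_last)"

definition Gamma_m :: "(real^'m::finite) set" where
  "Gamma_m = {x. \<forall>i. x $ i > 0}"

definition Gamma_1 :: "(real^'m::finite) set" where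
  "Gamma_1 = {x. (\<Sum>i\<in>UNIV. x $ i) > 0}"

definition perm_vec :: "('m::finite \<Rightarrow> 'm) \<Rightarrow> real^'m \<Rightarrow> real^'m" where
  "perm_vec \<sigma> x = (\<chi> i. x $ \<sigma> i)"

definition elliptic_data :: "(real^'m::finite \<Rightarrow> real) \<Rightarrow> (real^'m) set \<Rightarrow> bool" where
  "elliptic_data f \<Gamma> \<longleftrightarrow>
     open \<Gamma> \<and> convex \<Gamma> \<and>
     (\<forall>x\<in>\<Gamma>. \<forall>t>0. t *\<^sub>R x \<in> \<Gamma>) \<and>
     (\<forall>\<sigma> x. \<sigma> permutes UNIV \<longrightarrow> x \<in> \<Gamma> \<longrightarrow> perm_vec \<sigma> x \<in> \<Gamma>) \<and>
     Gamma_m \<subseteq> \<Gamma> \<and> \<Gamma> \<subseteq> Gamma_1 \<and>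
     continuous_on (closure \<Gamma>) f \<and>
     (\<exists>Df. (\<forall>x\<in>\<Gamma>. (f has_derivative (\<lambda>v. Df x \<bullet> v)) (at x)) \<and>
           continuous_on \<Gamma> Df \<and> (\<forall>x\<in>\<Gamma>. Df x \<in> Gamma_m)) \<and>
     (\<forall>\<sigma> x. \<sigma> permutes UNIV \<longrightarrow> x \<in> closure \<Gamma> \<longrightarrow> f (perm_vec \<sigma> x) = f x) \<and>
     (\<forall>x\<in>frontier \<Gamma>. f x = 0) \<and>
     (\<forall>x\<in>\<Gamma>. f x > 0) \<and>
     (\<forall>x\<in>\<Gamma>. \<forall>t>0. f (t *\<^sub>R x) = t * f x)"

end

theory Submission
  imports Defs
begin

text \<open>Let \<open>x\<close> be a maximum point of \<open>\<rho>\<close> on the closed hemisphere. Along every great circle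
  leaving \<open>x\<close> into the closed hemisphere, \<open>\<rho>\<close> has a one-sided maximum at \<open>x\<close>, so its first
  derivative there is \<open>\<le> 0\<close> and, if that vanishes, so is its second derivative. In the interior
  this kills the round gradient; on the boundary its tangential part vanishes likewise, while
  \<open>h(g) = c \<le> 0\<close> makes the inward normal derivative \<open>\<ge> 0\<close>, so the gradient vanishes too. Then
  the round Hessian is \<open>\<le> 0\<close> (the Hessian is even in the direction, so inward directions suffice),
  hence \<open>Sch(g) \<ge> g\<^sub>0/2\<close> is positive definite at \<open>x\<close>, \<open>\<lambda>(g) \<in> \<Gamma>\<^sub>m\<close> and \<open>f(\<lambda>(g)) > 0\<close>.\<close>

lemma deriv_nonpos_at_right_max:
  fixes \<phi> :: "real \<Rightarrow> real"
  assumes "(\<phi> has_real_derivative D) (at t)"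
    and "\<forall>\<^sub>F s in at_right t. \<phi> s \<le> \<phi> t"
  shows "D \<le> 0"
proof (rule ccontr)
  assume "\<not> D \<le> 0"
  then obtain d where "d > 0" "\<forall>h>0. h < d \<longrightarrow> \<phi> t < \<phi> (t + h)"
    using DERIV_pos_inc_right[OF assms(1)] by auto
  then have "\<forall>\<^sub>F s in at_right t. \<phi> t < \<phi> s"
    unfolding eventually_at_right_field
    by (intro exI[of _ "t + d"]) (auto dest: spec[of _ "_ - t"])
  with assms(2) have "\<forall>\<^sub>F s in at_right t. False"
    by eventually_elim simp
  then show False
    by (simp add: trivial_limit_at_right_real)
qed

lemma second_deriv_nonpos_at_right_max:
  fixes \<phi> \<phi>' :: "real \<Rightarrow> real"
  assumes "\<forall>\<^sub>F s in nhds t. (\<phi> has_real_derivative \<phi>' s) (at s)"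
    and "(\<phi>' has_real_derivative D) (at t)" and "\<phi>' t = 0"
    and "\<forall>\<^sub>F s in at_right t. \<phi> s \<le> \<phi> t"
  shows "D \<le> 0"
proof (rule ccontr)
  assume "\<not> D \<le> 0"
  then obtain d1 where d1: "d1 > 0" "\<forall>h>0. h < d1 \<longrightarrow> 0 < \<phi>' (t + h)"
    using DERIV_pos_inc_right[OF assms(2)] assms(3) by auto
  obtain d2 where d2: "d2 > 0" "\<forall>s. dist s t < d2 \<longrightarrow> (\<phi> has_real_derivative \<phi>' s) (at s)"
    using assms(1) by (auto simp: eventually_nhds_metric)
  obtain b where b: "b > t" "\<forall>s>t. s < b \<longrightarrow> \<phi> s \<le> \<phi> t"
    using assms(4) by (auto simp: eventually_at_right_field)
  define h where "h = min d1 (min d2 (b - t)) / 2"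
  have h: "0 < h" "h < d1" "h < d2" "t + h < b"
    using d1(1) d2(1) b(1) by (auto simp: h_def min_def field_simps)
  have "\<phi> (t + h) \<le> \<phi> t"
    using b(2) h by simp
  moreover have "0 < \<phi>' r" if "t < r" "r < t + h" for r
    using d1(2)[rule_format, of "r - t"] h that by simp
  moreover have "(\<phi> has_real_derivative \<phi>' r) (at r)" if "t \<le> r" "r \<le> t + h" for r
    using d2(2) h that by (simp add: dist_real_def)
  ultimately show False
    using MVT2[of t "t + h" \<phi> \<phi>'] h(1) by (smt (verit) mult_pos_pos)
qed

definition great_circle :: "'a::real_normed_vector \<Rightarrow> 'a \<Rightarrow> real \<Rightarrow> 'a" where
  "great_circle x v t = cos t *\<^sub>R x + sin t *\<^sub>R v"

lemma great_circle_0 [simp]: "great_circle x v 0 = x"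
  by (simp add: great_circle_def)

lemma great_circle_has_derivative:
  "(great_circle x v has_derivative (\<lambda>h. h *\<^sub>R great_circle v (- x) t)) (at t)"
  unfolding great_circle_def
  by (auto intro!: derivative_eq_intros simp: algebra_simps)

lemma norm_great_circle:
  fixes x v :: "'a::real_inner"
  assumes "norm x = 1" "norm v = 1" "v \<bullet> x = 0"
  shows "norm (great_circle x v t) = 1"
proof -
  have "x \<bullet> x = 1" "v \<bullet> v = 1"
    using assms by (simp_all flip: power2_norm_eq_inner)
  then have "great_circle x v t \<bullet> great_circle x v t = (cos t)\<^sup>2 + (sin t)\<^sup>2"
    using assms(3) by (simp add: great_circle_def inner_add_left inner_add_right inner_commute
        power2_eq_square)
  then show ?thesis
    by (simp add: norm_eq_sqrt_inner)
qed

locale gradient_hessian =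
  fixes U :: "'a::real_inner set" and \<rho> :: "'a \<Rightarrow> real"
    and G :: "'a \<Rightarrow> 'a" and H :: "'a \<Rightarrow> 'a \<Rightarrow> 'a"
  assumes open_domain: "open U"
    and has_derivative_rho: "x \<in> U \<Longrightarrow> (\<rho> has_derivative (\<lambda>v. G x \<bullet> v)) (at x)"
    and has_derivative_G: "x \<in> U \<Longrightarrow> (G has_derivative H x) (at x)"
begin

lemma continuous_on_rho: "S \<subseteq> U \<Longrightarrow> continuous_on S \<rho>"
  by (meson continuous_at_imp_continuous_on has_derivative_continuous has_derivative_rho subsetD)

lemma linear_H: "x \<in> U \<Longrightarrow> linear (H x)"
  using has_derivative_G has_derivative_linear by blast

lemma great_circle_right_max:
  assumes "x \<in> U" and max: "\<forall>\<^sub>F t in at_right 0. \<rho> (great_circle x v t) \<le> \<rho> x"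
  shows "G x \<bullet> v \<le> 0"
    and "G x \<bullet> v = 0 \<Longrightarrow> H x v \<bullet> v - G x \<bullet> x \<le> 0"
proof -
  let ?\<gamma> = "great_circle x v" and ?\<gamma>' = "great_circle v (- x)"
  define \<phi>' where "\<phi>' t = G (?\<gamma> t) \<bullet> ?\<gamma>' t" for t
  note d\<gamma> = great_circle_has_derivative
  have "isCont ?\<gamma> 0"
    using d\<gamma> has_derivative_continuous by blast
  then have "\<forall>\<^sub>F t in nhds 0. ?\<gamma> t \<in> U"
    using open_domain \<open>x \<in> U\<close> by (simp add: eventually_nhds_conv_at isCont_def topological_tendstoD)
  then have d\<phi>: "\<forall>\<^sub>F t in nhds 0. ((\<lambda>t. \<rho> (?\<gamma> t)) has_real_derivative \<phi>' t) (at t)"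
  proof eventually_elim
    case (elim t)
    show ?case
      unfolding has_field_derivative_def \<phi>'_def
      by (rule has_derivative_eq_rhs[OF has_derivative_compose[OF d\<gamma> has_derivative_rho[OF elim]]])
        (simp add: fun_eq_iff)
  qed
  \<comment> \<open>the great circle has acceleration \<open>-x\<close> at \<open>0\<close>, whence the term \<open>- G x \<bullet> x\<close>\<close>
  have dG\<gamma>: "((\<lambda>t. G (?\<gamma> t)) has_derivative (\<lambda>h. H x (h *\<^sub>R v))) (at 0)"
    using has_derivative_compose[OF d\<gamma>[of x v 0], of G "H x"] has_derivative_G[OF \<open>x \<in> U\<close>] by simp
  have "H x (h *\<^sub>R v) = h *\<^sub>R H x v" for h
    using has_derivative_G[OF \<open>x \<in> U\<close>] by (simp add: has_derivative_linear linear_scale)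
  then have d\<phi>': "(\<phi>' has_real_derivative H x v \<bullet> v - G x \<bullet> x) (at 0)"
    unfolding has_field_derivative_def \<phi>'_def
    by (intro has_derivative_eq_rhs[OF has_derivative_inner[OF dG\<gamma> d\<gamma>[of v "- x"]]])
      (simp add: fun_eq_iff algebra_simps)
  show "G x \<bullet> v \<le> 0"
    using deriv_nonpos_at_right_max[OF eventually_nhds_x_imp_x[OF d\<phi>]] max
    by (simp add: \<phi>'_def)
  show "H x v \<bullet> v - G x \<bullet> x \<le> 0" if "G x \<bullet> v = 0"
    using second_deriv_nonpos_at_right_max[OF d\<phi> d\<phi>'] max that
    by (simp add: \<phi>'_def)
qed

end

lemma closure_hemi: "closure (hemi :: 'm::finite pt set) = {y. norm y = 1 \<and> snd y \<ge> 0}"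
proof
  have "closed {y :: 'm pt. norm y = 1 \<and> snd y \<ge> 0}"
    by (intro closed_Collect_conj closed_Collect_eq closed_Collect_le) (auto intro: continuous_intros)
  then show "closure hemi \<subseteq> {y :: 'm pt. norm y = 1 \<and> snd y \<ge> 0}"
    by (rule closure_minimal[rotated]) (auto simp: hemi_def)
next
  show "{y :: 'm pt. norm y = 1 \<and> snd y \<ge> 0} \<subseteq> closure hemi"
  proof
    fix y :: "'m pt"
    assume y: "y \<in> {y. norm y = 1 \<and> snd y \<ge> 0}"
    show "y \<in> closure hemi"
    proof (cases "snd y > 0")
      case True
      then have "y \<in> hemi"
        using y by (simp add: hemi_def)
      then show ?thesis
        using closure_subset by blast
    next
      case False
      have "isCont (great_circle y e_last) 0"
        using great_circle_has_derivative has_derivative_continuous by blast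
      then have "(great_circle y e_last \<longlongrightarrow> y) (at_right 0)"
        by (simp add: isCont_def filterlim_at_split)
      moreover have "great_circle y e_last t \<in> hemi" if "0 < t" "t < 1" for t
      proof -
        have "0 < sin t"
          using that pi_gt3 by (auto intro!: sin_gt_zero)
        then show ?thesis
          using y False norm_great_circle[of y e_last t]
          by (auto simp: hemi_def great_circle_def e_last_def inner_prod_def)
      qed
      then have "\<forall>\<^sub>F t in at_right 0. great_circle y e_last t \<in> closure hemi"
        unfolding eventually_at_right_field using closure_subset by (intro exI[of _ 1]) auto
      ultimately show ?thesis
        by (intro Lim_in_closed_set[OF closed_closure _ trivial_limit_at_right_real])
    qed
  qed
qed

lemma compact_closure_hemi: "compact (closure (hemi :: 'm::finite pt set))"
  unfolding compact_closure bounded_iff hemi_def by auto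

lemma great_circle_eventually_in_closure_hemi:
  fixes x v :: "'m::finite pt"
  assumes "x \<in> closure hemi" "v \<bullet> x = 0" "norm v = 1" "snd x > 0 \<or> snd v \<ge> 0"
  shows "\<forall>\<^sub>F t in at_right 0. great_circle x v t \<in> closure hemi"
proof -
  have x: "norm x = 1" "snd x \<ge> 0"
    using assms(1) by (auto simp: closure_hemi)
  have "\<forall>\<^sub>F t in at_right 0. snd (great_circle x v t) \<ge> 0"
  proof (cases "snd x > 0")
    case True
    have "((\<lambda>t. snd (great_circle x v t)) \<longlongrightarrow> snd (great_circle x v 0)) (at_right 0)"
      unfolding great_circle_def by (intro tendsto_intros)
    then have "\<forall>\<^sub>F t in at_right 0. snd (great_circle x v t) > 0"
      using True by (simp add: order_tendstoD(1))
    then show ?thesis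
      by eventually_elim simp
  next
    case False
    have "snd (great_circle x v t) \<ge> 0" if "0 < t" "t < 1" for t
    proof -
      have "0 < sin t" "0 < cos t"
        using that pi_gt3 by (auto intro!: sin_gt_zero cos_gt_zero)
      then show ?thesis
        using x False assms(4) by (simp add: great_circle_def)
    qed
    then show ?thesis
      unfolding eventually_at_right_field by (intro exI[of _ 1]) auto
  qed
  then show ?thesis
    by (rule eventually_mono) (simp add: closure_hemi norm_great_circle x(1) assms(2,3))
qed

lemma sph_grad_inner_tangent: "w \<bullet> x = 0 \<Longrightarrow> sph_grad G x \<bullet> w = G x \<bullet> w"
  by (simp add: sph_grad_def inner_diff_left inner_commute[of x w])

lemma sph_grad_orthogonal:
  assumes "norm x = 1"
  shows "sph_grad G x \<bullet> x = 0"
proof -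
  have "x \<bullet> x = 1"
    using assms by (simp flip: power2_norm_eq_inner)
  then show ?thesis
    by (simp add: sph_grad_def inner_diff_left)
qed

lemma sph_hess_unit: "norm v = 1 \<Longrightarrow> sph_hess G H x v v = H x v \<bullet> v - G x \<bullet> x"
  by (simp add: sph_hess_def flip: power2_norm_eq_inner)

lemma sph_hess_uminus: "linear (H x) \<Longrightarrow> sph_hess G H x (- v) (- v) = sph_hess G H x v v"
  by (simp add: sph_hess_def linear_neg)

lemma schouten_at_critical_point:
  "sph_grad G x = 0 \<Longrightarrow> schouten G H x v w = (v \<bullet> w) / 2 - sph_hess G H x v w"
  by (simp add: schouten_def)

lemma mean_curv_nonpos_imp_snd_sph_grad_nonneg:
  "mean_curv \<rho> G x \<le> 0 \<Longrightarrow> 0 \<le> snd (sph_grad G x)"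
  by (simp add: mean_curv_def e_last_def inner_prod_def zero_le_mult_iff)

lemma sch_eigs_in_Gamma_m:
  fixes x :: "'m::finite pt" and lam :: "real^'m"
  assumes "sch_eigs \<rho> G H x lam"
    and pos: "\<And>v. v \<bullet> x = 0 \<Longrightarrow> norm v = 1 \<Longrightarrow> 0 < schouten G H x v v"
  shows "lam \<in> Gamma_m"
proof -
  obtain b :: "'m \<Rightarrow> 'm pt" where b: "\<And>i. b i \<bullet> x = 0" "\<And>i. b i \<bullet> b i = 1"
    and eig: "\<And>i w. w \<bullet> x = 0 \<Longrightarrow> schouten G H x (b i) w = lam $ i * (exp (2 * \<rho> x) * (b i \<bullet> w))"
    using assms(1) unfolding sch_eigs_def by (metis (full_types))
  have "0 < lam $ i * exp (2 * \<rho> x)" for i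
    using pos[of "b i"] eig[of "b i" i] b by (simp add: norm_eq_sqrt_inner)
  then show ?thesis
    by (simp add: Gamma_m_def zero_less_mult_iff)
qed

lemma elliptic_data_pos_on_Gamma_m: "elliptic_data f \<Gamma> \<Longrightarrow> lam \<in> Gamma_m \<Longrightarrow> 0 < f lam"
  by (auto simp: elliptic_data_def)

locale hemisphere_gradient_hessian = gradient_hessian U \<rho> G H
  for U :: "'m::finite pt set" and \<rho> G H +
  assumes closure_hemi_subset: "closure hemi \<subseteq> U"
begin

lemma exists_max_on_closure_hemi:
  obtains x where "x \<in> closure hemi" "\<forall>y\<in>closure hemi. \<rho> y \<le> \<rho> x"
proof -
  have "(0, 1) \<in> (hemi :: 'm pt set)"
    by (simp add: hemi_def)
  then have "closure (hemi :: 'm pt set) \<noteq> {}"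
    using closure_subset by blast
  then show ?thesis
    using continuous_attains_sup[OF compact_closure_hemi _ continuous_on_rho[OF closure_hemi_subset]]
      that by blast
qed

context
  fixes x :: "'m pt"
  assumes x: "x \<in> closure hemi" and max: "\<forall>y\<in>closure hemi. \<rho> y \<le> \<rho> x"
begin

lemma max_along_great_circle:
  assumes "v \<bullet> x = 0" "norm v = 1" "snd x > 0 \<or> snd v \<ge> 0"
  shows "G x \<bullet> v \<le> 0" and "G x \<bullet> v = 0 \<Longrightarrow> sph_hess G H x v v \<le> 0"
proof -
  have "\<forall>\<^sub>F t in at_right 0. \<rho> (great_circle x v t) \<le> \<rho> x"
    using great_circle_eventually_in_closure_hemi[OF x assms] by eventually_elim (use max in blast)
  moreover have "x \<in> U"
    using closure_hemi_subset x by blast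
  ultimately show "G x \<bullet> v \<le> 0" and "G x \<bullet> v = 0 \<Longrightarrow> sph_hess G H x v v \<le> 0"
    using great_circle_right_max assms(2) by (auto simp: sph_hess_unit)
qed

lemma sph_grad_eq_0_at_max:
  assumes "snd x > 0 \<or> snd (sph_grad G x) \<ge> 0"
  shows "sph_grad G x = 0"
proof (rule ccontr)
  define g where "g = sph_grad G x"
  assume "sph_grad G x \<noteq> 0"
  then have "norm g > 0"
    by (simp add: g_def)
  have "g \<bullet> x = 0"
    using sph_grad_orthogonal[of x G] x by (simp add: g_def closure_hemi)
  define v where "v = g /\<^sub>R norm g"
  have v: "v \<bullet> x = 0" "norm v = 1" "snd x > 0 \<or> snd v \<ge> 0"
    using \<open>g \<bullet> x = 0\<close> assms \<open>norm g > 0\<close> by (auto simp: v_def g_def)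
  have "G x \<bullet> g = (norm g)\<^sup>2"
    using sph_grad_inner_tangent[OF \<open>g \<bullet> x = 0\<close>, of G] by (simp add: g_def power2_norm_eq_inner)
  then have "G x \<bullet> v = norm g"
    using \<open>norm g > 0\<close> by (simp add: v_def power2_eq_square)
  then show False
    using max_along_great_circle(1)[OF v] \<open>norm g > 0\<close> by simp
qed

lemma sph_hess_nonpos_at_critical_max:
  assumes "sph_grad G x = 0" "v \<bullet> x = 0" "norm v = 1"
  shows "sph_hess G H x v v \<le> 0"
proof -
  have tangent_case: "sph_hess G H x w w \<le> 0"
    if "w \<bullet> x = 0" "norm w = 1" "snd x > 0 \<or> snd w \<ge> 0" for w
    using max_along_great_circle(2)[OF that] sph_grad_inner_tangent[OF that(1), of G] assms(1)
    by simp
  have "linear (H x)"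
    using linear_H closure_hemi_subset x by blast
  then show ?thesis
    using tangent_case[of v] tangent_case[of "- v"] assms(2,3)
    by (cases "snd v \<ge> 0") (auto simp: sph_hess_uminus)
qed

end

end

theorem mainTheorem10:
  fixes f :: "real^'m::finite \<Rightarrow> real" and \<Gamma> :: "(real^'m) set"
    and c \<alpha> :: real and U :: "'m pt set"
    and \<rho> :: "'m pt \<Rightarrow> real" and G :: "'m pt \<Rightarrow> 'm pt" and H :: "'m pt \<Rightarrow> 'm pt \<Rightarrow> 'm pt"
  assumes "CARD('m) \<ge> 3"
    and "elliptic_data f \<Gamma>"
    and "c \<le> 0"
    and "0 < \<alpha>" and "\<alpha> < 1"
    and "C2_alpha_rep \<alpha> (closure hemi) U \<rho> G H"
  shows "\<not> ((\<forall>x\<in>closure hemi. \<exists>lam. sch_eigs \<rho> G H x lam \<and> lam \<in> closure \<Gamma> \<and> f lam = 0)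
           \<and> (\<forall>x\<in>hemi_bdry. mean_curv \<rho> G x = c))"
proof
  assume "(\<forall>x\<in>closure hemi. \<exists>lam. sch_eigs \<rho> G H x lam \<and> lam \<in> closure \<Gamma> \<and> f lam = 0)
           \<and> (\<forall>x\<in>hemi_bdry. mean_curv \<rho> G x = c)"
  then have eq: "\<And>x. x \<in> closure hemi \<Longrightarrow> \<exists>lam. sch_eigs \<rho> G H x lam \<and> f lam = 0"
    and bdry: "\<And>x. x \<in> hemi_bdry \<Longrightarrow> mean_curv \<rho> G x = c"
    by blast+
  interpret hemisphere_gradient_hessian U \<rho> G H
    using assms(6) by unfold_locales (auto simp: C2_alpha_rep_def)
  obtain x where x: "x \<in> closure hemi" and max: "\<forall>y\<in>closure hemi. \<rho> y \<le> \<rho> x"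
    by (rule exists_max_on_closure_hemi)
  have "snd x > 0 \<or> snd (sph_grad G x) \<ge> 0"
    using x bdry[of x] assms(3) mean_curv_nonpos_imp_snd_sph_grad_nonneg[of \<rho> G x]
    by (force simp: closure_hemi hemi_bdry_def)
  then have crit: "sph_grad G x = 0"
    by (rule sph_grad_eq_0_at_max[OF x max])
  obtain lam where "sch_eigs \<rho> G H x lam" "f lam = 0"
    using eq[OF x] by blast
  moreover have "0 < schouten G H x v v" if "v \<bullet> x = 0" "norm v = 1" for v
    using sph_hess_nonpos_at_critical_max[OF x max crit that] schouten_at_critical_point[OF crit]
      that(2) by (simp flip: power2_norm_eq_inner)
  ultimately show False
    using sch_eigs_in_Gamma_m elliptic_data_pos_on_Gamma_m[OF assms(2)] by fastforce
qed

end
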